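(* Let $(\mathcal{X},\mathcal{B})$ be a $2$-IPPS$(4,v)$. If $B_1,B_2\in\mathcal{B}$ are distinct blocks with $|B_1\cap B_2|=2$, then there is no block $B'\in\mathcal{B}\setminus\{B_1,B_2\}$ such that $B_i\setminus(B_1\cap B_2)\subseteq B'$ for some $i\in\{1,2\}$.
   Context: A $(w,v)$ set system is a pair $(\mathcal{X},\mathcal{B})$ with $|\mathcal{X}|=v$ and $\mathcal{B}$ a family of $w$-element subsets (blocks) of $\mathcal{X}$. For a $w$-subset $T\subseteq\mathcal{X}$ let $P_t(T)=\{\mathcal{P}\subseteq\mathcal{B}: |\mathcal{P}|\le t,\ T\subseteq\bigcup_{B\in\mathcal{P}}B\}$. The set system is a $t$-IPPS$(w,v)$ if for every $w$-subset $T\subseteq\mathcal{X}$, either $P_t(T)=\emptyset$ or $\bigcap_{\mathcal{P}\in P_t(T)}\mathcal{P}\neq\emptyset$. *)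

theory Defs
  imports Main
begin

definition set_system :: "nat \<Rightarrow> nat \<Rightarrow> 'a set \<Rightarrow> 'a set set \<Rightarrow> bool" where
  "set_system w v X \<B> \<longleftrightarrow> finite X \<and> card X = v \<and>
     (\<forall>B\<in>\<B>. B \<subseteq> X \<and> card B = w)"

definition P_t :: "nat \<Rightarrow> 'a set set \<Rightarrow> 'a set \<Rightarrow> 'a set set set" where
  "P_t t \<B> T = {\<P>. \<P> \<subseteq> \<B> \<and> finite \<P> \<and> card \<P> \<le> t \<and> T \<subseteq> \<Union>\<P>}"

definition IPPS :: "nat \<Rightarrow> nat \<Rightarrow> nat \<Rightarrow> 'a set \<Rightarrow> 'a set set \<Rightarrow> bool" where
  "IPPS t w v X \<B> \<longleftrightarrow> set_system w v X \<B> \<and>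
     (\<forall>T. T \<subseteq> X \<and> card T = w \<longrightarrow>
        P_t t \<B> T = {} \<or> \<Inter>(P_t t \<B> T) \<noteq> {})"

end

theory Submission
  imports Defs
begin

text \<open>If \<open>B\<^sub>1 - (B\<^sub>1 \<inter> B\<^sub>2) \<subseteq> B'\<close>, then the block \<open>B\<^sub>1\<close>, viewed as the
  \<open>4\<close>-set \<open>T\<close>, is covered both by \<open>{B\<^sub>1}\<close> and by \<open>{B\<^sub>2, B'}\<close>; these coverings share no
  block, so \<open>T\<close> violates the identifiable parent property.\<close>

lemma IPPS_block_not_covered_by_others:
  assumes "IPPS t w v X \<B>" and "1 \<le> t"
    and "A \<in> \<B>" and "\<P> \<in> P_t t \<B> A" and "A \<notin> \<P>"
  shows False
proof -
  from assms(1,3) have "A \<subseteq> X" "card A = w"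
    unfolding IPPS_def set_system_def by auto
  with assms(1) have "P_t t \<B> A = {} \<or> \<Inter>(P_t t \<B> A) \<noteq> {}"
    unfolding IPPS_def by blast
  moreover have "{A} \<in> P_t t \<B> A"
    using assms(2,3) unfolding P_t_def by auto
  moreover from this have "\<Inter>(P_t t \<B> A) \<subseteq> {A} \<inter> \<P>"
    using assms(4) by blast
  ultimately show False
    using assms(5) by blast
qed

lemma IPPS_block_diff_not_subset:
  assumes "IPPS 2 w v X \<B>" and "A \<in> \<B>" and "C \<in> \<B>" and "D \<in> \<B>"
    and "A \<noteq> C" and "A \<noteq> D" and "A - (A \<inter> C) \<subseteq> D"
  shows False
proof (rule IPPS_block_not_covered_by_others[OF assms(1) _ assms(2)])
  show "{C, D} \<in> P_t 2 \<B> A"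
    using assms(3,4,7) unfolding P_t_def by (auto simp: card_insert_if)
qed (use assms(5,6) in auto)

theorem proposition4:
  fixes X :: "'a set" and \<B> :: "'a set set" and v :: nat
  assumes "IPPS 2 4 v X \<B>"
    and "B1 \<in> \<B>" and "B2 \<in> \<B>" and "B1 \<noteq> B2"
    and "card (B1 \<inter> B2) = 2"
  shows "\<not> (\<exists>B' \<in> \<B> - {B1, B2}.
            B1 - (B1 \<inter> B2) \<subseteq> B' \<or> B2 - (B1 \<inter> B2) \<subseteq> B')"
proof
  assume "\<exists>B' \<in> \<B> - {B1, B2}. B1 - (B1 \<inter> B2) \<subseteq> B' \<or> B2 - (B1 \<inter> B2) \<subseteq> B'"
  then obtain B' where B': "B' \<in> \<B>" "B1 \<noteq> B'" "B2 \<noteq> B'"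
    and "B1 - (B1 \<inter> B2) \<subseteq> B' \<or> B2 - (B2 \<inter> B1) \<subseteq> B'"
    by (auto simp: Int_commute)
  then show False
    using IPPS_block_diff_not_subset[OF assms(1,2,3) B'(1) assms(4)]
      IPPS_block_diff_not_subset[OF assms(1,3,2) B'(1) assms(4)[symmetric]]
    by blast
qed

end
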